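(* Let $X$ and $Y$ be finite-dimensional real Banach spaces. If there exists a Hahn-Banach operator $T:X\to Y$ of rank $k$, then $f(X^* )+f(Y)\ge k-1$.
   Context: All spaces are real. $B(X)$ denotes the closed unit ball of $X$. A bounded linear operator $T:X\to Y$ between Banach spaces is a Hahn-Banach operator if for every Banach space $Z$ and every isometric embedding of $X$ into $Z$ (regarding $X$ as a subspace of $Z$) there exists a bounded linear operator $\tilde T:Z\to Y$ with $\|\tilde T\|=\|T\|$ and $\tilde Tx=Tx$ for all $x\in X$. For a finite-dimensional space $X$, a support set of $B(X)$ is the intersection of $B(X)$ with a supporting hyperplane of $B(X)$; the dimension of a set is the dimension of its affine hull; $f(X)$ is the maximal dimension of a support set of $B(X)$. $X^*$ is the dual space of $X$. *)

theory Defs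
  imports "HOL-Analysis.Analysis"
begin

text \<open>A real normed vector space (given as a type) is finite-dimensional if it is
  spanned by a finite set.  Finite-dimensional normed spaces are automatically complete.\<close>
definition fin_dim_space :: "'a::real_normed_vector itself \<Rightarrow> bool" where
  "fin_dim_space _ \<longleftrightarrow> (\<exists>B::'a set. finite B \<and> span B = UNIV)"

text \<open>Dimension of a nonempty set = dimension of its affine hull
  = dimension of the linear span of its difference set.\<close>
definition affdim :: "'a::real_vector set \<Rightarrow> nat" where
  "affdim S = dim {x - y | x y. x \<in> S \<and> y \<in> S}"

definition support_set :: "'a::real_vector set \<Rightarrow> 'a set \<Rightarrow> bool" where
  "support_set B S \<longleftrightarrow> (\<exists>(\<phi>::'a \<Rightarrow> real) c. linear \<phi> \<and> \<phi> \<noteq> (\<lambda>x. 0) \<and>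
      (\<forall>x\<in>B. \<phi> x \<le> c) \<and> (\<exists>x\<in>B. \<phi> x = c) \<and> S = B \<inter> {x. \<phi> x = c})"

definition fX :: "'a::real_normed_vector itself \<Rightarrow> nat" where
  "fX _ = Max {affdim S | S. support_set (cball (0::'a) 1) S}"

type_synonym amb = "nat \<Rightarrow>\<^sub>C real"

definition norm_on :: "amb set \<Rightarrow> (amb \<Rightarrow> real) \<Rightarrow> bool" where
  "norm_on V N \<longleftrightarrow>
     (\<forall>z\<in>V. 0 \<le> N z \<and> (N z = 0 \<longleftrightarrow> z = 0)) \<and>
     (\<forall>z\<in>V. \<forall>a. N (a *\<^sub>R z) = \<bar>a\<bar> * N z) \<and>
     (\<forall>z\<in>V. \<forall>w\<in>V. N (z + w) \<le> N z + N w)"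

definition complete_on :: "amb set \<Rightarrow> (amb \<Rightarrow> real) \<Rightarrow> bool" where
  "complete_on V N \<longleftrightarrow>
     (\<forall>s::nat \<Rightarrow> amb. (\<forall>n. s n \<in> V) \<and>
        (\<forall>e>0. \<exists>M. \<forall>m\<ge>M. \<forall>n\<ge>M. N (s m - s n) < e) \<longrightarrow>
        (\<exists>z\<in>V. (\<lambda>n. N (s n - z)) \<longlonglongrightarrow> 0))"

definition banach_on :: "amb set \<Rightarrow> (amb \<Rightarrow> real) \<Rightarrow> bool" where
  "banach_on V N \<longleftrightarrow> subspace V \<and> norm_on V N \<and> complete_on V N"

definition linear_on :: "amb set \<Rightarrow> (amb \<Rightarrow> 'b::real_vector) \<Rightarrow> bool" where
  "linear_on V S \<longleftrightarrow> (\<forall>z\<in>V. \<forall>w\<in>V. S (z + w) = S z + S w) \<and>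
     (\<forall>z\<in>V. \<forall>a. S (a *\<^sub>R z) = a *\<^sub>R S z)"

definition bounded_on :: "amb set \<Rightarrow> (amb \<Rightarrow> real) \<Rightarrow> (amb \<Rightarrow> 'b::real_normed_vector) \<Rightarrow> bool" where
  "bounded_on V N S \<longleftrightarrow> (\<exists>K. \<forall>z\<in>V. norm (S z) \<le> K * N z)"

definition opnorm_on :: "amb set \<Rightarrow> (amb \<Rightarrow> real) \<Rightarrow> (amb \<Rightarrow> 'b::real_normed_vector) \<Rightarrow> real" where
  "opnorm_on V N S = Sup {norm (S z) | z. z \<in> V \<and> N z \<le> 1}"

definition hahn_banach_op :: "('a::real_normed_vector \<Rightarrow> 'b::real_normed_vector) \<Rightarrow> bool" where
  "hahn_banach_op T \<longleftrightarrow> bounded_linear T \<and>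
     (\<forall>(V::amb set) N (J::'a \<Rightarrow> amb).
        banach_on V N \<and> linear J \<and> (\<forall>x. J x \<in> V) \<and> (\<forall>x. N (J x) = norm x) \<longrightarrow>
        (\<exists>S::amb \<Rightarrow> 'b. linear_on V S \<and> bounded_on V N S \<and>
             opnorm_on V N S = onorm T \<and> (\<forall>x. S (J x) = T x)))"

end

theory Submission
  imports Defs
begin

(* Let x0 be a point of the unit ball where T attains its norm \<nu> > 0, and y0 a norming
   functional of T x0.  Then G = {f in the dual unit ball. f x0 = 1} and
   F = {y \<in> B(Y). y0 y = 1} are support sets.  Embed X isometrically into the bounded
   sequences and extend T to S with norm \<nu>.  If x \<in> B(X) is annihilated by G, the sequences
   J x0 \<plusminus> J x can be moved into the unit ball by adding one bounded sequence a that is small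
   wherever J x0 almost peaks; since y0 \<circ> S peaks at J x0, it vanishes on a, so both
   S (J x0 \<plusminus> J x + a) / \<nu> lie in F and T x is a multiple of a difference of two points of F.
   Thus T maps the annihilator of G, of codimension at most dim G \<le> affdim G + 1, into the
   span of F - F, and k \<le> affdim F + affdim G + 1. *)

section \<open>Finite-dimensional normed spaces\<close>

lemma bounded_family_convergent_subseq:
  fixes f :: "nat \<Rightarrow> 'i \<Rightarrow> real"
  assumes "finite I" and "\<And>i k. i \<in> I \<Longrightarrow> \<bar>f k i\<bar> \<le> M"
  obtains r where "strict_mono r" and "\<And>i. i \<in> I \<Longrightarrow> convergent (\<lambda>k. f (r k) i)"
proof -
  from assms have "\<exists>r. strict_mono r \<and> (\<forall>i\<in>I. convergent (\<lambda>k. f (r k) i))"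
  proof (induction I arbitrary: f rule: finite_induct)
    case empty
    show ?case by (auto intro: strict_monoI)
  next
    case (insert j I)
    obtain r1 where r1: "strict_mono r1" "\<forall>i\<in>I. convergent (\<lambda>k. f (r1 k) i)"
      using insert.IH[of f] insert.prems by auto
    have "bounded (range (\<lambda>k. f (r1 k) j))"
      using insert.prems by (intro boundedI[of _ M]) auto
    then obtain l r2 where r2: "strict_mono r2" "((\<lambda>k. f (r1 k) j) \<circ> r2) \<longlonglongrightarrow> l"
      using bounded_imp_convergent_subsequence by blast
    have "convergent (\<lambda>k. f (r1 (r2 k)) i)" if i: "i \<in> insert j I" for i
    proof (cases "i = j")
      case True
      then show ?thesis using r2(2) by (auto simp: o_def convergent_def)
    next
      case False
      then obtain l' where "(\<lambda>k. f (r1 k) i) \<longlonglongrightarrow> l'"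
        using i r1(2) by (auto simp: convergent_def)
      from LIMSEQ_subseq_LIMSEQ[OF this r2(1)] show ?thesis
        by (auto simp: o_def convergent_def)
    qed
    then have "\<forall>i\<in>insert j I. convergent (\<lambda>k. f ((r1 \<circ> r2) k) i)" by simp
    moreover have "strict_mono (r1 \<circ> r2)" using r1(1) r2(1) by (rule strict_mono_o)
    ultimately show ?case by blast
  qed
  then show thesis using that by blast
qed

lemma independent_l1_sphere_norm_bounded_below:
  fixes B :: "'a::real_normed_vector set"
  assumes fin: "finite B" and ind: "independent B"
  obtains \<delta> where "\<delta> > 0" "\<And>d. (\<Sum>b\<in>B. \<bar>d b\<bar>) = 1 \<Longrightarrow> \<delta> \<le> norm (\<Sum>b\<in>B. d b *\<^sub>R b)"
proof (rule ccontr)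
  assume "\<not> thesis"
  with that have "\<exists>d. (\<Sum>b\<in>B. \<bar>d b\<bar>) = 1 \<and> norm (\<Sum>b\<in>B. d b *\<^sub>R b) < 1 / real (Suc k)" for k
    by (meson not_le of_nat_0_less_iff zero_less_Suc divide_pos_pos zero_less_one)
  then obtain d where d_sum: "\<And>k. (\<Sum>b\<in>B. \<bar>d k b\<bar>) = 1"
    and d_norm: "\<And>k. norm (\<Sum>b\<in>B. d k b *\<^sub>R b) < 1 / real (Suc k)"
    by metis
  have d_norm_le: "norm (\<Sum>b\<in>B. d k b *\<^sub>R b) \<le> 1 / real (Suc k)" for k
    using d_norm[of k] by simp
  have d_le: "\<bar>d k b\<bar> \<le> 1" if "b \<in> B" for k b
    using d_sum[of k] member_le_sum[of b B "\<lambda>b. \<bar>d k b\<bar>"] fin that by auto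
  obtain r where r: "strict_mono r" "\<And>b. b \<in> B \<Longrightarrow> convergent (\<lambda>k. d (r k) b)"
    using bounded_family_convergent_subseq[OF fin, of d 1] d_le by blast
  then obtain l where l: "\<And>b. b \<in> B \<Longrightarrow> (\<lambda>k. d (r k) b) \<longlonglongrightarrow> l b"
    unfolding convergent_def by metis
  have "(\<lambda>k. \<Sum>b\<in>B. \<bar>d (r k) b\<bar>) \<longlonglongrightarrow> (\<Sum>b\<in>B. \<bar>l b\<bar>)"
    by (intro tendsto_sum tendsto_rabs l)
  then have l_sum: "(\<Sum>b\<in>B. \<bar>l b\<bar>) = 1"
    by (simp add: d_sum LIMSEQ_const_iff)
  have "(\<lambda>k. \<Sum>b\<in>B. d (r k) b *\<^sub>R b) \<longlonglongrightarrow> (\<Sum>b\<in>B. l b *\<^sub>R b)"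
    by (intro tendsto_sum tendsto_scaleR l tendsto_const)
  moreover have "(\<lambda>k. \<Sum>b\<in>B. d (r k) b *\<^sub>R b) \<longlonglongrightarrow> 0"
  proof (rule tendsto_norm_zero_cancel,
      rule tendsto_sandwich[of "\<lambda>_. 0" _ _ "\<lambda>k. 1 / real (Suc (r k))"])
    show "(\<lambda>k. 1 / real (Suc (r k))) \<longlonglongrightarrow> 0"
      using LIMSEQ_subseq_LIMSEQ[OF LIMSEQ_Suc[OF lim_inverse_n'] r(1)]
      by (simp add: o_def divide_inverse)
  qed (use d_norm_le in auto)
  ultimately have "(\<Sum>b\<in>B. l b *\<^sub>R b) = 0" using LIMSEQ_unique by blast
  then have "\<forall>b\<in>B. l b = 0" using independentD[OF ind fin order_refl] by blast
  then show False using l_sum by simp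
qed

lemma independent_coeffs_le_norm:
  fixes B :: "'a::real_normed_vector set"
  assumes fin: "finite B" and ind: "independent B"
  obtains C where "\<And>c b. b \<in> B \<Longrightarrow> \<bar>c b\<bar> \<le> C * norm (\<Sum>b\<in>B. c b *\<^sub>R b)"
proof -
  obtain \<delta> where \<delta>: "\<delta> > 0" "\<And>d. (\<Sum>b\<in>B. \<bar>d b\<bar>) = 1 \<Longrightarrow> \<delta> \<le> norm (\<Sum>b\<in>B. d b *\<^sub>R b)"
    using independent_l1_sphere_norm_bounded_below[OF fin ind] by blast
  have "\<bar>c b\<bar> \<le> 1 / \<delta> * norm (\<Sum>b\<in>B. c b *\<^sub>R b)" if "b \<in> B" for c b
  proof -
    define s where "s = (\<Sum>b\<in>B. \<bar>c b\<bar>)"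
    have cb: "\<bar>c b\<bar> \<le> s" unfolding s_def using fin that by (intro member_le_sum) auto
    show ?thesis
    proof (cases "s = 0")
      case True
      then show ?thesis using cb \<delta>(1) by simp
    next
      case False
      then have "s > 0" unfolding s_def by (simp add: less_le sum_nonneg)
      have "\<delta> \<le> norm (\<Sum>b\<in>B. (c b / s) *\<^sub>R b)"
        using \<open>s > 0\<close> by (intro \<delta>(2)) (simp add: abs_divide s_def flip: sum_divide_distrib)
      also have "\<dots> = norm (\<Sum>b\<in>B. c b *\<^sub>R b) / s"
        using \<open>s > 0\<close> by (simp add: divide_inverse mult.commute flip: scaleR_scaleR scaleR_sum_right)
      finally have "s \<le> norm (\<Sum>b\<in>B. c b *\<^sub>R b) / \<delta>"
        using \<open>s > 0\<close> \<delta>(1) by (simp add: field_simps)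
      then show ?thesis using cb by simp
    qed
  qed
  then show thesis by (rule that)
qed

lemma fin_dim_space_basis:
  assumes "fin_dim_space TYPE('a::real_normed_vector)"
  obtains B :: "'a::real_normed_vector set" where "finite B" "independent B" "span B = UNIV"
proof -
  obtain A :: "'a set" where A: "finite A" "span A = UNIV"
    using assms unfolding fin_dim_space_def by blast
  obtain B where B: "B \<subseteq> A" "independent B" "A \<subseteq> span B"
    using maximal_independent_subset[of A] by blast
  have "span B = UNIV"
    using B A by (metis span_mono span_span top.extremum_uniqueI)
  then show ?thesis using B A that finite_subset by blast
qed

lemma sum_representation_basis:
  fixes B :: "'a::real_vector set"
  assumes "finite B" "independent B" "span B = UNIV"
  shows "(\<Sum>b\<in>B. representation B x b *\<^sub>R b) = x"
  using assms by (intro sum_representation_eq) auto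

lemma representation_le_norm:
  fixes B :: "'a::real_normed_vector set"
  assumes "finite B" "independent B" "span B = UNIV"
  obtains C where "C \<ge> 0" "\<And>x b. \<bar>representation B x b\<bar> \<le> C * norm x"
proof -
  obtain C where C: "\<And>c b. b \<in> B \<Longrightarrow> \<bar>c b\<bar> \<le> C * norm (\<Sum>b\<in>B. c b *\<^sub>R b)"
    using independent_coeffs_le_norm assms by blast
  have "\<bar>representation B x b\<bar> \<le> max C 0 * norm x" for x b
  proof (cases "b \<in> B")
    case True
    then have "\<bar>representation B x b\<bar> \<le> C * norm x"
      using C[of b "representation B x"] sum_representation_basis[OF assms] by simp
    also have "\<dots> \<le> max C 0 * norm x" by (intro mult_right_mono) auto
    finally show ?thesis .
  next
    case False
    then have "representation B x b = 0" using representation_ne_zero by blast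
    then show ?thesis by simp
  qed
  then show ?thesis using that[of "max C 0"] by simp
qed

lemma fin_dim_space_bounded_linear:
  fixes f :: "'a::real_normed_vector \<Rightarrow> 'b::real_normed_vector"
  assumes "fin_dim_space TYPE('a)" and "linear f"
  shows "bounded_linear f"
proof -
  obtain B :: "'a set" where B: "finite B" "independent B" "span B = UNIV"
    using fin_dim_space_basis[OF assms(1)] by blast
  obtain C where C: "C \<ge> 0" "\<And>x b. \<bar>representation B x b\<bar> \<le> C * norm x"
    using representation_le_norm[OF B] by blast
  have "norm (f x) \<le> norm x * (C * (\<Sum>b\<in>B. norm (f b)))" for x
  proof -
    have "f x = f (\<Sum>b\<in>B. representation B x b *\<^sub>R b)"
      using sum_representation_basis[OF B] by simp
    then have "f x = (\<Sum>b\<in>B. representation B x b *\<^sub>R f b)"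
      using assms(2) by (simp add: linear_sum linear_scale)
    then have "norm (f x) \<le> (\<Sum>b\<in>B. norm (representation B x b *\<^sub>R f b))"
      by (metis norm_sum)
    also have "\<dots> = (\<Sum>b\<in>B. \<bar>representation B x b\<bar> * norm (f b))" by simp
    also have "\<dots> \<le> (\<Sum>b\<in>B. (C * norm x) * norm (f b))"
      by (intro sum_mono mult_right_mono C(2)) auto
    finally show ?thesis by (simp add: sum_distrib_left mult_ac)
  qed
  then show ?thesis
    using assms(2) by (intro bounded_linear_intro[where K="C * (\<Sum>b\<in>B. norm (f b))"])
      (auto simp: linear_add linear_scale)
qed

lemma fin_dim_space_compact:
  fixes S :: "'a::real_normed_vector set"
  assumes "fin_dim_space TYPE('a)" and "bounded S" and "closed S"
  shows "compact S"
  unfolding compact_eq_seq_compact_metric seq_compact_def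
proof (intro allI impI)
  fix x :: "nat \<Rightarrow> 'a" assume x: "\<forall>n. x n \<in> S"
  obtain B :: "'a set" where B: "finite B" "independent B" "span B = UNIV"
    using fin_dim_space_basis[OF assms(1)] by blast
  obtain C where C: "C \<ge> 0" "\<And>x b. \<bar>representation B x b\<bar> \<le> C * norm x"
    using representation_le_norm[OF B] by blast
  obtain M where M: "\<And>y. y \<in> S \<Longrightarrow> norm y \<le> M" using assms(2) bounded_iff by blast
  have "\<bar>representation B (x k) b\<bar> \<le> C * M" for k b
    using C(2)[of "x k" b] M[of "x k"] x C(1) by (meson mult_left_mono order_trans)
  then obtain r where r: "strict_mono r" "\<And>b. b \<in> B \<Longrightarrow> convergent (\<lambda>k. representation B (x (r k)) b)"
    using bounded_family_convergent_subseq[OF B(1), of "\<lambda>k b. representation B (x k) b"] by blast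
  then obtain l where l: "\<And>b. b \<in> B \<Longrightarrow> (\<lambda>k. representation B (x (r k)) b) \<longlonglongrightarrow> l b"
    unfolding convergent_def by metis
  have "(\<lambda>k. \<Sum>b\<in>B. representation B (x (r k)) b *\<^sub>R b) \<longlonglongrightarrow> (\<Sum>b\<in>B. l b *\<^sub>R b)"
    by (intro tendsto_sum tendsto_scaleR l tendsto_const)
  then have lim: "(x \<circ> r) \<longlonglongrightarrow> (\<Sum>b\<in>B. l b *\<^sub>R b)"
    using sum_representation_basis[OF B] by (simp add: o_def)
  then have "(\<Sum>b\<in>B. l b *\<^sub>R b) \<in> S"
    using closed_sequentially[OF assms(3)] x by (metis comp_apply)
  with lim r(1) show "\<exists>l\<in>S. \<exists>r. strict_mono r \<and> (x \<circ> r) \<longlonglongrightarrow> l" by blast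
qed

lemma fin_dim_space_dual:
  assumes "fin_dim_space TYPE('a::real_normed_vector)"
  shows "fin_dim_space TYPE('a \<Rightarrow>\<^sub>L real)"
proof -
  obtain B :: "'a set" where B: "finite B" "independent B" "span B = UNIV"
    using fin_dim_space_basis[OF assms] by blast
  define e where "e b = Blinfun (\<lambda>x. representation B x b)" for b
  have e_apply: "blinfun_apply (e b) x = representation B x b" for b x
    unfolding e_def using B
    by (subst bounded_linear_Blinfun_apply)
      (auto intro!: fin_dim_space_bounded_linear[OF assms] linearI simp: representation_add representation_scale)
  have "f = (\<Sum>b\<in>B. f b *\<^sub>R e b)" for f :: "'a \<Rightarrow>\<^sub>L real"
  proof (rule blinfun_eqI)
    fix x
    have "f x = f (\<Sum>b\<in>B. representation B x b *\<^sub>R b)" using sum_representation_basis[OF B] by simp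
    also have "\<dots> = blinfun_apply (\<Sum>b\<in>B. f b *\<^sub>R e b) x"
      by (simp add: blinfun.sum_right blinfun.scaleR_right blinfun.sum_left e_apply mult.commute scaleR_blinfun.rep_eq)
    finally show "f x = blinfun_apply (\<Sum>b\<in>B. f b *\<^sub>R e b) x" .
  qed
  then have "f \<in> span (e ` B)" for f :: "'a \<Rightarrow>\<^sub>L real"
    by (metis (no_types, lifting) image_eqI span_base span_scale span_sum)
  then show ?thesis unfolding fin_dim_space_def using B(1) by blast
qed

lemma fin_dim_space_onorm_attained:
  fixes T :: "'a::real_normed_vector \<Rightarrow> 'b::real_normed_vector"
  assumes "fin_dim_space TYPE('a)" and T: "bounded_linear T"
  obtains x0 where "norm x0 \<le> 1" "norm (T x0) = onorm T"
proof -
  have "compact (cball (0::'a) 1)" using assms(1) by (simp add: fin_dim_space_compact)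
  moreover have "continuous_on (cball 0 1) (\<lambda>x. norm (T x))"
    using T by (intro continuous_on_norm linear_continuous_on)
  ultimately obtain x0 where x0: "norm x0 \<le> 1" and max: "\<And>x. norm x \<le> 1 \<Longrightarrow> norm (T x) \<le> norm (T x0)"
    using continuous_attains_sup[of "cball 0 1" "\<lambda>x. norm (T x)"] by force
  have "norm (T x) / norm x \<le> norm (T x0)" for x
  proof (cases "x = 0")
    case False
    then have "norm (T (x /\<^sub>R norm x)) \<le> norm (T x0)" by (intro max) simp
    then show ?thesis by (simp add: linear_scale[OF bounded_linear.linear[OF T]] divide_inverse mult.commute)
  qed simp
  then have "onorm T \<le> norm (T x0)" unfolding onorm_def by (intro cSUP_least) auto
  moreover have "norm (T x0) \<le> onorm T"
    using onorm[OF T, of x0] mult_left_le[OF x0 onorm_pos_le[OF T]] by linarith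
  ultimately show thesis using that x0 by simp
qed

lemma dual_ball_abs_peak_annihilates:
  fixes x0 x :: "'a::real_normed_vector" and f :: "'a \<Rightarrow>\<^sub>L real"
  assumes perp: "\<And>f :: 'a \<Rightarrow>\<^sub>L real. norm f \<le> 1 \<Longrightarrow> blinfun_apply f x0 = 1 \<Longrightarrow> blinfun_apply f x = 0"
    and "norm f \<le> 1" and "\<bar>blinfun_apply f x0\<bar> = 1"
  shows "blinfun_apply f x = 0"
proof -
  define g where "g = (if blinfun_apply f x0 \<ge> 0 then f else - f)"
  have "norm g \<le> 1" "blinfun_apply g x0 = 1"
    using assms(2,3) by (auto simp: g_def uminus_blinfun.rep_eq)
  then have "blinfun_apply g x = 0" by (rule perp)
  then show ?thesis by (auto simp: g_def uminus_blinfun.rep_eq split: if_splits)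
qed

lemma dual_ball_uniform_annihilation:
  fixes x0 x :: "'a::real_normed_vector"
  assumes "fin_dim_space TYPE('a)" and x0: "norm x0 \<le> 1" and "\<epsilon> > 0"
    and perp: "\<And>f :: 'a \<Rightarrow>\<^sub>L real. norm f \<le> 1 \<Longrightarrow> blinfun_apply f x0 = 1 \<Longrightarrow> blinfun_apply f x = 0"
  obtains \<eta> where "\<eta> > 0" "\<And>f :: 'a \<Rightarrow>\<^sub>L real. norm f \<le> 1 \<Longrightarrow> 1 - \<eta> \<le> \<bar>blinfun_apply f x0\<bar> \<Longrightarrow> \<bar>blinfun_apply f x\<bar> < \<epsilon>"
proof -
  define K where "K = cball (0 :: 'a \<Rightarrow>\<^sub>L real) 1 \<inter> {f. \<epsilon> \<le> \<bar>blinfun_apply f x\<bar>}"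
  have "closed {f :: 'a \<Rightarrow>\<^sub>L real. \<epsilon> \<le> \<bar>blinfun_apply f x\<bar>}"
    by (intro closed_Collect_le continuous_intros)
  then have K: "compact K"
    unfolding K_def using fin_dim_space_dual[OF assms(1)]
    by (intro fin_dim_space_compact) (auto intro: bounded_subset)
  have val_le: "\<bar>blinfun_apply f x0\<bar> \<le> 1" if "norm f \<le> 1" for f :: "'a \<Rightarrow>\<^sub>L real"
    using norm_blinfun[of f x0] mult_mono[OF that x0] by simp
  show thesis
  proof (cases "K = {}")
    case True
    then have "\<bar>blinfun_apply f x\<bar> < \<epsilon>" if "norm f \<le> 1" for f :: "'a \<Rightarrow>\<^sub>L real"
      using that by (force simp: K_def)
    then show thesis using that[of 1] by simp
  next
    case False
    \<comment> \<open>the maximum of \<open>\<bar>f x0\<bar>\<close> over the compact set \<open>K\<close> is below 1, by \<open>perp\<close>\<close>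
    have "continuous_on K (\<lambda>f. \<bar>blinfun_apply f x0\<bar>)" by (intro continuous_intros)
    then obtain f1 where f1: "f1 \<in> K" and max: "\<And>f. f \<in> K \<Longrightarrow> \<bar>blinfun_apply f x0\<bar> \<le> \<bar>blinfun_apply f1 x0\<bar>"
      using continuous_attains_sup[OF K False] by blast
    have "\<bar>blinfun_apply f1 x0\<bar> \<noteq> 1"
    proof
      assume "\<bar>blinfun_apply f1 x0\<bar> = 1"
      with f1 have "blinfun_apply f1 x = 0"
        by (intro dual_ball_abs_peak_annihilates[OF perp]) (simp_all add: K_def)
      with f1 \<open>\<epsilon> > 0\<close> show False by (simp add: K_def)
    qed
    moreover have "\<bar>blinfun_apply f1 x0\<bar> \<le> 1" using f1 val_le by (simp add: K_def)
    ultimately have pos: "(1 - \<bar>blinfun_apply f1 x0\<bar>) / 2 > 0" by simp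
    have "\<bar>blinfun_apply f x\<bar> < \<epsilon>" if "norm f \<le> 1" "1 - (1 - \<bar>blinfun_apply f1 x0\<bar>) / 2 \<le> \<bar>blinfun_apply f x0\<bar>" for f
    proof (rule ccontr)
      assume "\<not> \<bar>blinfun_apply f x\<bar> < \<epsilon>"
      then have "f \<in> K" using that by (simp add: K_def)
      from max[OF this] show False using that pos by argo
    qed
    then show thesis using that[OF pos] by blast
  qed
qed

lemma rational_combination_approx:
  fixes B :: "'a::real_normed_vector set"
  assumes B: "finite B" "independent B" "span B = UNIV" and e: "e > 0"
  obtains q where "\<And>b. q b \<in> \<rat>" "norm (x - (\<Sum>b\<in>B. q b *\<^sub>R b)) < e"
proof -
  define K where "K = (\<Sum>b\<in>B. norm b) + 1"
  have K: "K > 0" unfolding K_def by (smt (verit) norm_ge_zero sum_nonneg)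
  have "\<forall>b. \<exists>q. q \<in> \<rat> \<and> representation B x b < q \<and> q < representation B x b + e / K"
    using Rats_dense_in_real e K by (metis divide_pos_pos less_add_same_cancel1)
  then obtain q where q: "\<And>b. q b \<in> \<rat>" "\<And>b. representation B x b < q b"
    "\<And>b. q b < representation B x b + e / K"
    by metis
  have "x - (\<Sum>b\<in>B. q b *\<^sub>R b) = (\<Sum>b\<in>B. (representation B x b - q b) *\<^sub>R b)"
    using sum_representation_basis[OF B, of x] by (simp add: scaleR_diff_left sum_subtractf)
  then have "norm (x - (\<Sum>b\<in>B. q b *\<^sub>R b)) \<le> (\<Sum>b\<in>B. \<bar>representation B x b - q b\<bar> * norm b)"
    by (metis (no_types, lifting) norm_scaleR norm_sum sum.cong)
  also have "\<dots> \<le> (\<Sum>b\<in>B. e / K * norm b)"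
  proof (intro sum_mono mult_right_mono)
    show "\<bar>representation B x b - q b\<bar> \<le> e / K" for b using q(2,3)[of b] by linarith
  qed simp
  also have "\<dots> = e / K * (K - 1)" by (simp add: K_def sum_distrib_left)
  also have "\<dots> < e" using e K by (simp add: field_simps)
  finally show thesis using q(1) that by blast
qed

lemma fin_dim_space_dense_sequence:
  assumes "fin_dim_space TYPE('a::real_normed_vector)"
  obtains d :: "nat \<Rightarrow> 'a::real_normed_vector" where "\<And>x e. e > 0 \<Longrightarrow> \<exists>n. norm (x - d n) < e"
proof -
  obtain B :: "'a set" where B: "finite B" "independent B" "span B = UNIV"
    using fin_dim_space_basis[OF assms] by blast
  define D where "D = (\<lambda>q. \<Sum>b\<in>B. q b *\<^sub>R b) ` (PiE B (\<lambda>_. \<rat>))"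
  have "countable D" unfolding D_def
    by (intro countable_image countable_PiE B(1) countable_rat)
  moreover have "(\<lambda>b\<in>B. 0) \<in> PiE B (\<lambda>_. \<rat>)" by auto
  then have "D \<noteq> {}" unfolding D_def by blast
  ultimately have range_d: "range (from_nat_into D) = D" by (simp add: range_from_nat_into)
  have "\<exists>n. norm (x - from_nat_into D n) < e" if e: "e > 0" for x e
  proof -
    obtain q where q: "\<And>b. q b \<in> \<rat>" "norm (x - (\<Sum>b\<in>B. q b *\<^sub>R b)) < e"
      using rational_combination_approx[OF B e] by blast
    have "(\<Sum>b\<in>B. q b *\<^sub>R b) = (\<lambda>q. \<Sum>b\<in>B. q b *\<^sub>R b) (restrict q B)"
      by (auto intro: sum.cong)
    moreover have "restrict q B \<in> PiE B (\<lambda>_. \<rat>)" using q(1) by auto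
    ultimately have "(\<Sum>b\<in>B. q b *\<^sub>R b) \<in> range (from_nat_into D)"
      unfolding range_d unfolding D_def by (rule image_eqI)
    then obtain n where "(\<Sum>b\<in>B. q b *\<^sub>R b) = from_nat_into D n" by (rule rangeE)
    then show ?thesis using q(2) by (intro exI[of _ n]) simp
  qed
  then show thesis by (rule that)
qed

section \<open>Hahn-Banach extension in finite dimensions\<close>

definition norm_dominated_on :: "'a::real_normed_vector set \<Rightarrow> ('a \<Rightarrow> real) \<Rightarrow> bool" where
  "norm_dominated_on W \<phi> \<longleftrightarrow> subspace W \<and> (\<forall>u\<in>W. \<forall>v\<in>W. \<phi> (u + v) = \<phi> u + \<phi> v) \<and>
     (\<forall>u\<in>W. \<forall>a. \<phi> (a *\<^sub>R u) = a * \<phi> u) \<and> (\<forall>u\<in>W. \<phi> u \<le> norm u)"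

lemma span_insert_subspace:
  assumes "subspace W"
  shows "span (insert v W) = {w + s *\<^sub>R v | w s. w \<in> W}"
proof -
  have "span W = W" using assms by (simp add: span_eq_iff)
  then have "span (insert v W) = {x. \<exists>k. x - k *\<^sub>R v \<in> W}"
    using span_insert[of v W] by (simp only:)
  also have "\<dots> = {w + s *\<^sub>R v | w s. w \<in> W}"
  proof (intro set_eqI iffI)
    fix z assume "z \<in> {x. \<exists>k. x - k *\<^sub>R v \<in> W}"
    then obtain k where "z - k *\<^sub>R v \<in> W" by blast
    moreover have "z = (z - k *\<^sub>R v) + k *\<^sub>R v" by simp
    ultimately show "z \<in> {w + s *\<^sub>R v | w s. w \<in> W}" by blast
  next
    fix z assume "z \<in> {w + s *\<^sub>R v | w s. w \<in> W}"
    then obtain w s where "w \<in> W" "z = w + s *\<^sub>R v" by blast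
    then have "z - s *\<^sub>R v \<in> W" by simp
    then show "z \<in> {x. \<exists>k. x - k *\<^sub>R v \<in> W}" by blast
  qed
  finally show ?thesis .
qed

lemma subspace_add_scaleR_coeff_unique:
  assumes "subspace W" "v \<notin> W" "w \<in> W" "w + s *\<^sub>R v - s' *\<^sub>R v \<in> W"
  shows "s' = s"
proof (rule ccontr)
  assume "s' \<noteq> s"
  have "(s - s') *\<^sub>R v = (w + s *\<^sub>R v - s' *\<^sub>R v) - w" by (simp add: algebra_simps)
  moreover have "(w + s *\<^sub>R v - s' *\<^sub>R v) - w \<in> W"
    using subspace_diff[OF assms(1) assms(4) assms(3)] .
  ultimately have "(s - s') *\<^sub>R v \<in> W" by metis
  then have "inverse (s - s') *\<^sub>R ((s - s') *\<^sub>R v) \<in> W" by (rule subspace_scale[OF assms(1)])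
  with \<open>s' \<noteq> s\<close> have "v \<in> W" by simp
  with assms(2) show False ..
qed

lemma norm_dominated_extension_bound:
  assumes dom: "norm_dominated_on W \<phi>" and w: "w \<in> W"
    and lower: "\<And>w. w \<in> W \<Longrightarrow> \<phi> w - norm (w - v) \<le> c"
    and upper: "\<And>w. w \<in> W \<Longrightarrow> c \<le> norm (w + v) - \<phi> w"
  shows "\<phi> w + s * c \<le> norm (w + s *\<^sub>R v)"
proof -
  have W: "subspace W" and scale: "\<And>u a. u \<in> W \<Longrightarrow> \<phi> (a *\<^sub>R u) = a * \<phi> u"
    and le: "\<And>u. u \<in> W \<Longrightarrow> \<phi> u \<le> norm u"
    using dom unfolding norm_dominated_on_def by auto
  show ?thesis
  proof (cases s "0::real" rule: linorder_cases)
    case equal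
    then show ?thesis using le w by simp
  next
    case greater
    have "inverse s *\<^sub>R w \<in> W" using w W subspace_scale by blast
    then have "s * c \<le> s * (norm (inverse s *\<^sub>R w + v) - \<phi> (inverse s *\<^sub>R w))"
      using greater upper by (intro mult_left_mono) auto
    also have "\<dots> = norm (s *\<^sub>R (inverse s *\<^sub>R w + v)) - \<phi> w"
      using greater scale[OF w] by (simp add: right_diff_distrib)
    also have "s *\<^sub>R (inverse s *\<^sub>R w + v) = w + s *\<^sub>R v"
      using greater by (simp add: scaleR_add_right)
    finally show ?thesis by simp
  next
    case less
    define m where "m = - s"
    have m: "m > 0" using less by (simp add: m_def)
    have "inverse m *\<^sub>R w \<in> W" using w W subspace_scale by blast
    then have "m * (\<phi> (inverse m *\<^sub>R w) - norm (inverse m *\<^sub>R w - v)) \<le> m * c"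
      using m lower by (intro mult_left_mono) auto
    also have "m * (\<phi> (inverse m *\<^sub>R w) - norm (inverse m *\<^sub>R w - v))
        = \<phi> w - norm (m *\<^sub>R (inverse m *\<^sub>R w - v))"
      using m scale[OF w] by (simp add: right_diff_distrib)
    also have "m *\<^sub>R (inverse m *\<^sub>R w - v) = w + s *\<^sub>R v"
      using m by (simp add: scaleR_diff_right m_def)
    finally show ?thesis by (simp add: m_def)
  qed
qed

lemma norm_dominated_extension_step:
  assumes dom: "norm_dominated_on W \<phi>" and v: "v \<notin> W"
    and lower: "\<And>w. w \<in> W \<Longrightarrow> \<phi> w - norm (w - v) \<le> c"
    and upper: "\<And>w. w \<in> W \<Longrightarrow> c \<le> norm (w + v) - \<phi> w"
  obtains \<psi> where "norm_dominated_on (span (insert v W)) \<psi>" "\<And>u. u \<in> W \<Longrightarrow> \<psi> u = \<phi> u" "\<psi> v = c"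
proof -
  have W: "subspace W" and add: "\<And>u w. u \<in> W \<Longrightarrow> w \<in> W \<Longrightarrow> \<phi> (u + w) = \<phi> u + \<phi> w"
    and scale: "\<And>u a. u \<in> W \<Longrightarrow> \<phi> (a *\<^sub>R u) = a * \<phi> u"
    using dom unfolding norm_dominated_on_def by auto
  have W0: "0 \<in> W" using W subspace_0 by blast
  define t where "t z = (THE s. z - s *\<^sub>R v \<in> W)" for z
  have t: "t (w + s *\<^sub>R v) = s" if "w \<in> W" for w s
    unfolding t_def
  proof (rule the_equality)
    show "w + s *\<^sub>R v - s *\<^sub>R v \<in> W" using that by simp
  qed (rule subspace_add_scaleR_coeff_unique[OF W v that])
  define \<psi> where "\<psi> z = \<phi> (z - t z *\<^sub>R v) + t z * c" for z
  have \<psi>: "\<psi> (w + s *\<^sub>R v) = \<phi> w + s * c" if "w \<in> W" for w s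
    unfolding \<psi>_def t[OF that] by simp
  have bound: "\<phi> w + s * c \<le> norm (w + s *\<^sub>R v)" if "w \<in> W" for w s
    using norm_dominated_extension_bound[OF dom that lower upper] .
  have "norm_dominated_on (span (insert v W)) \<psi>"
    unfolding norm_dominated_on_def span_insert_subspace[OF W]
  proof (intro conjI ballI allI)
    show "subspace {w + s *\<^sub>R v |w s. w \<in> W}"
      using subspace_span[of "insert v W"] by (simp add: span_insert_subspace[OF W])
  next
    fix u z assume "u \<in> {w + s *\<^sub>R v |w s. w \<in> W}" "z \<in> {w + s *\<^sub>R v |w s. w \<in> W}"
    then obtain w1 s1 w2 s2 where u: "u = w1 + s1 *\<^sub>R v" "w1 \<in> W" and z: "z = w2 + s2 *\<^sub>R v" "w2 \<in> W"
      by blast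
    have "\<psi> (u + z) = \<psi> ((w1 + w2) + (s1 + s2) *\<^sub>R v)" using u z by (simp add: algebra_simps)
    also have "\<dots> = \<phi> (w1 + w2) + (s1 + s2) * c" using u z W by (simp add: \<psi> subspace_add)
    also have "\<dots> = \<psi> u + \<psi> z" using u z by (simp add: \<psi> add algebra_simps)
    finally show "\<psi> (u + z) = \<psi> u + \<psi> z" .
  next
    fix u a assume "u \<in> {w + s *\<^sub>R v |w s. w \<in> W}"
    then obtain w1 s1 where u: "u = w1 + s1 *\<^sub>R v" "w1 \<in> W" by blast
    have "\<psi> (a *\<^sub>R u) = \<psi> (a *\<^sub>R w1 + (a * s1) *\<^sub>R v)" using u by (simp add: algebra_simps)
    also have "\<dots> = \<phi> (a *\<^sub>R w1) + (a * s1) * c" using u W by (simp add: \<psi> subspace_scale)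
    also have "\<dots> = a * \<psi> u" using u by (simp add: \<psi> scale algebra_simps)
    finally show "\<psi> (a *\<^sub>R u) = a * \<psi> u" .
  next
    fix u assume "u \<in> {w + s *\<^sub>R v |w s. w \<in> W}"
    then show "\<psi> u \<le> norm u" using \<psi> bound by auto
  qed
  moreover have "\<psi> u = \<phi> u" if "u \<in> W" for u using \<psi>[OF that, of 0] by simp
  moreover have "\<psi> v = c" using \<psi>[OF W0, of 1] scale[OF W0, of 0] by simp
  ultimately show thesis by (rule that)
qed

lemma norm_dominated_extension_bounds:
  assumes "norm_dominated_on W \<phi>"
  obtains c where "\<And>w. w \<in> W \<Longrightarrow> \<phi> w - norm (w - v) \<le> c"
    and "\<And>w. w \<in> W \<Longrightarrow> c \<le> norm (w + v) - \<phi> w"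
proof -
  have W: "subspace W" and add: "\<And>u w. u \<in> W \<Longrightarrow> w \<in> W \<Longrightarrow> \<phi> (u + w) = \<phi> u + \<phi> w"
    and le: "\<And>u. u \<in> W \<Longrightarrow> \<phi> u \<le> norm u"
    using assms unfolding norm_dominated_on_def by auto
  have W0: "0 \<in> W" using W subspace_0 by blast
  have gap: "\<phi> w1 - norm (w1 - v) \<le> norm (w2 + v) - \<phi> w2" if "w1 \<in> W" "w2 \<in> W" for w1 w2
  proof -
    have "\<phi> w1 + \<phi> w2 = \<phi> (w1 + w2)" using add that by simp
    also have "\<dots> \<le> norm (w1 + w2)" using le W subspace_add that by blast
    also have "\<dots> = norm ((w1 - v) + (w2 + v))" by simp
    also have "\<dots> \<le> norm (w1 - v) + norm (w2 + v)" by (rule norm_triangle_ineq)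
    finally show ?thesis by simp
  qed
  define L where "L = {\<phi> w - norm (w - v) | w. w \<in> W}"
  have "bdd_above L" unfolding L_def bdd_above_def using gap W0 by blast
  then show thesis
    using that[of "Sup L"] gap W0 unfolding L_def
    by (auto intro!: cSup_upper cSup_least)
qed

lemma norm_dominated_extension_finite:
  assumes "finite C" and "norm_dominated_on W \<phi>"
  obtains \<psi> where "norm_dominated_on (span (W \<union> C)) \<psi>" "\<And>u. u \<in> W \<Longrightarrow> \<psi> u = \<phi> u"
proof -
  from assms have "\<exists>\<psi>. norm_dominated_on (span (W \<union> C)) \<psi> \<and> (\<forall>u\<in>W. \<psi> u = \<phi> u)"
  proof (induction C rule: finite_induct)
    case empty
    then have "span W = W" by (simp add: norm_dominated_on_def span_eq_iff)
    with empty show ?case by (metis Un_empty_right)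
  next
    case (insert v C)
    then obtain \<psi> where \<psi>: "norm_dominated_on (span (W \<union> C)) \<psi>" "\<forall>u\<in>W. \<psi> u = \<phi> u" by blast
    show ?case
    proof (cases "v \<in> span (W \<union> C)")
      case True
      then have "span (W \<union> insert v C) = span (W \<union> C)"
        using span_redundant by (metis Un_insert_right)
      then show ?thesis using \<psi> by auto
    next
      case False
      obtain c where "\<And>w. w \<in> span (W \<union> C) \<Longrightarrow> \<psi> w - norm (w - v) \<le> c"
        "\<And>w. w \<in> span (W \<union> C) \<Longrightarrow> c \<le> norm (w + v) - \<psi> w"
        using norm_dominated_extension_bounds[OF \<psi>(1)] by blast
      then obtain \<psi>' where "norm_dominated_on (span (insert v (span (W \<union> C)))) \<psi>'"
        "\<And>u. u \<in> span (W \<union> C) \<Longrightarrow> \<psi>' u = \<psi> u"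
        using norm_dominated_extension_step[OF \<psi>(1) False] by metis
      moreover have "span (insert v (span (W \<union> C))) = span (W \<union> insert v C)"
        by (simp only: Un_insert_right span_insert span_span)
      ultimately show ?thesis using \<psi>(2) span_base[of _ "W \<union> C"] by auto
    qed
  qed
  then show thesis using that by blast
qed

lemma fin_dim_space_norming_functional:
  fixes x :: "'a::real_normed_vector"
  assumes "fin_dim_space TYPE('a)"
  obtains \<phi> :: "'a \<Rightarrow> real" where "linear \<phi>" "\<And>y. \<bar>\<phi> y\<bar> \<le> norm y" "\<phi> x = norm x"
proof (cases "x = 0")
  case True
  then show thesis using that[of "\<lambda>_. 0"] by (simp add: linear_zero)
next
  case False
  have "norm_dominated_on {0::'a} (\<lambda>_. 0)" by (auto simp: norm_dominated_on_def)
  then obtain \<phi>0 where \<phi>0: "norm_dominated_on (span {x, 0}) \<phi>0" "\<phi>0 x = norm x"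
    using norm_dominated_extension_step[of "{0}" "\<lambda>_. 0" x "norm x"] False by auto
  obtain B :: "'a set" where B: "finite B" "span B = UNIV"
    using assms unfolding fin_dim_space_def by blast
  obtain \<phi> where \<phi>: "norm_dominated_on (span (span {x, 0} \<union> B)) \<phi>"
    "\<And>u. u \<in> span {x, 0} \<Longrightarrow> \<phi> u = \<phi>0 u"
    using norm_dominated_extension_finite[OF B(1) \<phi>0(1)] by blast
  have "\<phi> x = norm x" using \<phi>(2)[of x] \<phi>0(2) by (simp add: span_base)
  have "span B \<subseteq> span (span {x, 0} \<union> B)" by (intro span_mono) blast
  then have "span (span {x, 0} \<union> B) = UNIV" using B(2) by blast
  then have dom: "\<And>u v. \<phi> (u + v) = \<phi> u + \<phi> v" "\<And>a u. \<phi> (a *\<^sub>R u) = a * \<phi> u"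
    "\<And>u. \<phi> u \<le> norm u"
    using \<phi>(1) unfolding norm_dominated_on_def by auto
  have bound: "\<bar>\<phi> y\<bar> \<le> norm y" for y
    using dom(2)[of "-1" y] dom(3)[of y] dom(3)[of "- y"] by auto
  have lin: "linear \<phi>" by (rule linearI) (simp_all add: dom)
  show thesis by (rule that[OF lin bound \<open>\<phi> x = norm x\<close>])
qed

section \<open>Extensions through the bounded sequences\<close>

lemma apply_Bcontfun_bounded:
  fixes f :: "nat \<Rightarrow> real"
  assumes "\<And>n. \<bar>f n\<bar> \<le> M"
  shows "apply_bcontfun (Bcontfun f) = f"
proof -
  have "f \<in> bcontfun" using assms by (intro bcontfun_normI[of f M]) auto
  then show ?thesis by (simp add: Bcontfun_inverse)
qed

lemma fin_dim_space_isometric_embedding_bcontfun: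
  assumes "fin_dim_space TYPE('a::real_normed_vector)"
  obtains J :: "'a::real_normed_vector \<Rightarrow> nat \<Rightarrow>\<^sub>C real" where "linear J" "\<And>y. norm (J y) = norm y"
proof -
  obtain d :: "nat \<Rightarrow> 'a" where d: "\<And>x e. e > 0 \<Longrightarrow> \<exists>n. norm (x - d n) < e"
    using fin_dim_space_dense_sequence[OF assms] by blast
  have "\<exists>\<phi>. linear \<phi> \<and> (\<forall>y. \<bar>\<phi> y\<bar> \<le> norm y) \<and> \<phi> (d n) = norm (d n)" for n
    using fin_dim_space_norming_functional[OF assms, of "d n"] by blast
  then obtain \<phi> where \<phi>: "\<And>n. linear (\<phi> n)" "\<And>n y. \<bar>\<phi> n y\<bar> \<le> norm y" "\<And>n. \<phi> n (d n) = norm (d n)"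
    by metis
  define J where "J y = Bcontfun (\<lambda>n. \<phi> n y)" for y
  have J_apply: "apply_bcontfun (J y) = (\<lambda>n. \<phi> n y)" for y
    unfolding J_def by (rule apply_Bcontfun_bounded) (rule \<phi>(2))
  have "linear J"
    by (rule linearI; rule bcontfun_eqI)
      (simp_all add: J_apply linear_add[OF \<phi>(1)] linear_scale[OF \<phi>(1)])
  moreover have "norm (J y) = norm y" for y
  proof (rule antisym)
    show "norm (J y) \<le> norm y" by (rule norm_bound) (simp add: J_apply \<phi>(2))
    show "norm y \<le> norm (J y)"
    proof (rule field_le_epsilon)
      fix e :: real assume "e > 0"
      then obtain n where n: "norm (y - d n) < e / 2" using d[of "e / 2"] by auto
      have "\<phi> n y = norm (d n) + \<phi> n (y - d n)"
        using linear_diff[OF \<phi>(1), of n y "d n"] \<phi>(3)[of n] by simp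
      moreover have "norm y \<le> norm (d n) + norm (y - d n)"
        using norm_triangle_ineq2[of y "d n"] by simp
      moreover have "\<bar>\<phi> n (y - d n)\<bar> \<le> norm (y - d n)" by (rule \<phi>(2))
      moreover have "\<phi> n y \<le> norm (J y)"
        using norm_bounded[of "J y" n] by (simp add: J_apply)
      ultimately show "norm y \<le> norm (J y) + e" using n by linarith
    qed
  qed
  ultimately show thesis by (rule that)
qed

lemma bcontfun_Cauchy_limit:
  fixes s :: "nat \<Rightarrow> nat \<Rightarrow>\<^sub>C real"
  assumes C: "\<And>e. e > 0 \<Longrightarrow> \<exists>M. \<forall>m\<ge>M. \<forall>k\<ge>M. norm (s m - s k) < e"
  obtains z where "(\<lambda>k. norm (s k - z)) \<longlonglongrightarrow> 0"
proof -
  have "uniformly_Cauchy_on UNIV (\<lambda>k. apply_bcontfun (s k))"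
  proof (rule uniformly_Cauchy_onI)
    fix e :: real assume "e > 0"
    then obtain M where "\<forall>m\<ge>M. \<forall>k\<ge>M. norm (s m - s k) < e" using C by blast
    moreover have "dist (s m n) (s k n) \<le> norm (s m - s k)" for m k n
      using norm_bounded[of "s m - s k" n] by (simp add: dist_real_def)
    ultimately show "\<exists>M. \<forall>n\<in>UNIV. \<forall>m\<ge>M. \<forall>k\<ge>M. dist (s m n) (s k n) < e"
      by (meson order_le_less_trans)
  qed
  then obtain g where "uniform_limit UNIV (\<lambda>k. apply_bcontfun (s k)) g sequentially"
    using Cauchy_uniformly_convergent uniformly_convergent_on_def by blast
  then obtain z where "s \<longlonglongrightarrow> z" by (rule uniform_limit_bcontfunE) simp
  then show thesis by (intro that tendsto_norm_zero LIM_zero)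
qed

lemma banach_on_bcontfun: "banach_on (UNIV :: (nat \<Rightarrow>\<^sub>C real) set) norm"
proof -
  have "\<exists>z. (\<lambda>k. norm (s k - z)) \<longlonglongrightarrow> 0"
    if "\<forall>e>0. \<exists>M. \<forall>m\<ge>M. \<forall>k\<ge>M. norm (s m - s k) < e" for s :: "nat \<Rightarrow> nat \<Rightarrow>\<^sub>C real"
    using that by (metis bcontfun_Cauchy_limit)
  then show ?thesis
    unfolding banach_on_def norm_on_def complete_on_def by (simp add: norm_triangle_ineq)
qed

lemma hahn_banach_op_bcontfun_extension:
  fixes T :: "'a::real_normed_vector \<Rightarrow> 'b::real_normed_vector" and J :: "'a \<Rightarrow> nat \<Rightarrow>\<^sub>C real"
  assumes "hahn_banach_op T" and "linear J" and "\<And>x. norm (J x) = norm x"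
  obtains S :: "(nat \<Rightarrow>\<^sub>C real) \<Rightarrow> 'b"
  where "linear S" "\<And>z. norm (S z) \<le> onorm T * norm z" "\<And>x. S (J x) = T x"
proof -
  obtain S :: "(nat \<Rightarrow>\<^sub>C real) \<Rightarrow> 'b" where S: "linear_on UNIV S" "bounded_on UNIV norm S"
    "opnorm_on UNIV norm S = onorm T" "\<And>x. S (J x) = T x"
    using assms banach_on_bcontfun unfolding hahn_banach_op_def by blast
  have lin: "linear S" using S(1) unfolding linear_on_def by (auto intro: linearI)
  obtain K where K: "\<And>z. norm (S z) \<le> K * norm z" using S(2) unfolding bounded_on_def by blast
  have bdd: "bdd_above {norm (S z) | z. z \<in> UNIV \<and> norm z \<le> 1}"
  proof (rule bdd_aboveI)
    fix t assume "t \<in> {norm (S z) | z. z \<in> UNIV \<and> norm z \<le> 1}"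
    then obtain w where "t = norm (S w)" "norm w \<le> 1" by blast
    then show "t \<le> \<bar>K\<bar>" using K[of w] by (smt (verit) mult_left_le norm_ge_zero abs_ge_self mult_right_mono)
  qed
  have unit: "norm (S u) \<le> onorm T" if "norm u \<le> 1" for u
  proof -
    have "norm (S u) \<le> Sup {norm (S z) | z. z \<in> UNIV \<and> norm z \<le> 1}"
      using that by (intro cSup_upper[OF _ bdd]) auto
    then show ?thesis using S(3) by (simp add: opnorm_on_def)
  qed
  have bound: "norm (S z) \<le> onorm T * norm z" for z
  proof (cases "z = 0")
    case True then show ?thesis using linear_0[OF lin] by simp
  next
    case False
    then have "norm (S (z /\<^sub>R norm z)) \<le> onorm T" by (intro unit) simp
    then show ?thesis using False by (simp add: linear_scale[OF lin] field_simps)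
  qed
  show thesis using lin bound S(4) by (rule that)
qed

lemma peak_functional_vanishes:
  fixes \<psi> :: "(nat \<Rightarrow>\<^sub>C real) \<Rightarrow> real" and w b :: "nat \<Rightarrow>\<^sub>C real"
  assumes lin: "linear \<psi>" and le: "\<And>z. norm z \<le> 1 \<Longrightarrow> \<psi> z \<le> \<nu>"
    and w: "norm w \<le> 1" "\<psi> w = \<nu>" and \<eta>: "\<eta> > 0"
    and b: "norm b \<le> 1" "\<And>n. 1 - \<eta> \<le> \<bar>w n\<bar> \<Longrightarrow> b n = 0"
  shows "\<psi> b = 0"
proof -
  have shift: "norm (w + t *\<^sub>R b) \<le> 1" if t: "\<bar>t\<bar> \<le> \<eta>" for t
  proof (rule norm_bound)
    fix n
    show "norm ((w + t *\<^sub>R b) n) \<le> 1"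
    proof (cases "1 - \<eta> \<le> \<bar>w n\<bar>")
      case True
      then show ?thesis using b(2) norm_bounded[of w n] w(1) by simp
    next
      case False
      have "\<bar>t\<bar> * \<bar>b n\<bar> \<le> \<eta> * 1"
        using t norm_bounded[of b n] b(1) by (intro mult_mono) auto
      then show ?thesis using False abs_triangle_ineq[of "w n" "t * b n"] by (simp add: abs_mult)
    qed
  qed
  have "\<psi> (w + \<eta> *\<^sub>R b) \<le> \<nu>" "\<psi> (w - \<eta> *\<^sub>R b) \<le> \<nu>"
    using le[OF shift[of \<eta>]] le[OF shift[of "- \<eta>"]] \<eta> by auto
  moreover have "\<psi> (w + \<eta> *\<^sub>R b) = \<nu> + \<eta> * \<psi> b" "\<psi> (w - \<eta> *\<^sub>R b) = \<nu> - \<eta> * \<psi> b"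
    using w(2) by (simp_all add: linear_add[OF lin] linear_diff[OF lin] linear_scale[OF lin])
  ultimately have "\<eta> * \<psi> b = 0" by linarith
  then show ?thesis using \<eta> by simp
qed

lemma peak_functional_small:
  fixes \<psi> :: "(nat \<Rightarrow>\<^sub>C real) \<Rightarrow> real" and w a :: "nat \<Rightarrow>\<^sub>C real"
  assumes lin: "linear \<psi>" and bd: "\<And>z. \<bar>\<psi> z\<bar> \<le> \<nu> * norm z"
    and w: "norm w \<le> 1" "\<psi> w = \<nu>" and \<eta>: "\<eta> > 0" and "\<epsilon> \<ge> 0"
    and a: "norm a \<le> 1" "\<And>n. 1 - \<eta> \<le> \<bar>w n\<bar> \<Longrightarrow> \<bar>a n\<bar> \<le> \<epsilon>"
  shows "\<bar>\<psi> a\<bar> \<le> \<nu> * \<epsilon>"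
proof -
  have "\<nu> \<ge> 0" using bd[of w] w norm_ge_zero[of w] by (smt (verit) mult_nonpos_nonneg)
  define b where "b = Bcontfun (\<lambda>n. if \<bar>w n\<bar> < 1 - \<eta> then a n else 0)"
  have b_apply: "apply_bcontfun b = (\<lambda>n. if \<bar>w n\<bar> < 1 - \<eta> then a n else 0)"
    unfolding b_def by (rule apply_Bcontfun_bounded[where M = "norm a"]) (simp add: norm_bounded[of a, simplified])
  have "norm b \<le> 1"
  proof (rule norm_bound)
    show "norm (b n) \<le> 1" for n using norm_bounded[of a n] a(1) by (simp add: b_apply)
  qed
  then have "\<psi> b = 0"
    using peak_functional_vanishes[OF lin _ w \<eta>] bd \<open>\<nu> \<ge> 0\<close>
    by (smt (verit) b_apply mult_left_le)
  moreover have "norm (a - b) \<le> \<epsilon>"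
    by (rule norm_bound) (use a(2) \<open>\<epsilon> \<ge> 0\<close> in \<open>auto simp: b_apply\<close>)
  then have "\<nu> * norm (a - b) \<le> \<nu> * \<epsilon>" using \<open>\<nu> \<ge> 0\<close> by (rule mult_left_mono)
  ultimately show ?thesis using bd[of "a - b"] by (simp add: linear_diff[OF lin])
qed

lemma isometry_coordinate_blinfun:
  fixes J :: "'a::real_normed_vector \<Rightarrow> nat \<Rightarrow>\<^sub>C real"
  assumes "linear J" and "\<And>y. norm (J y) = norm y"
  obtains f :: "'a \<Rightarrow>\<^sub>L real" where "\<And>y. blinfun_apply f y = J y n" "norm f \<le> 1"
proof -
  have le: "\<bar>J y n\<bar> \<le> norm y" for y using norm_bounded[of "J y" n] assms(2) by simp
  have "bounded_linear (\<lambda>y. J y n)"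
    using le by (intro bounded_linear_intro[where K = 1])
      (simp_all add: linear_add[OF assms(1)] linear_scale[OF assms(1)])
  then have f: "blinfun_apply (Blinfun (\<lambda>y. J y n)) y = J y n" for y
    by (simp add: bounded_linear_Blinfun_apply)
  have "norm (Blinfun (\<lambda>y. J y n)) \<le> 1"
    by (rule norm_blinfun_bound) (simp_all add: f le)
  with f show thesis by (rule that)
qed

lemma peak_functional_annihilates:
  fixes J :: "'a::real_normed_vector \<Rightarrow> nat \<Rightarrow>\<^sub>C real" and \<psi> :: "(nat \<Rightarrow>\<^sub>C real) \<Rightarrow> real"
    and a :: "nat \<Rightarrow>\<^sub>C real"
  assumes fin: "fin_dim_space TYPE('a)" and "\<nu> > 0"
    and J: "linear J" "\<And>y. norm (J y) = norm y"
    and \<psi>: "linear \<psi>" "\<And>z. \<bar>\<psi> z\<bar> \<le> \<nu> * norm z"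
    and x0: "norm x0 \<le> 1" "\<psi> (J x0) = \<nu>"
    and perp: "\<And>f :: 'a \<Rightarrow>\<^sub>L real. norm f \<le> 1 \<Longrightarrow> blinfun_apply f x0 = 1 \<Longrightarrow> blinfun_apply f x = 0"
    and a: "norm a \<le> 1" "\<And>n. \<bar>a n\<bar> \<le> \<bar>J x n\<bar>"
  shows "\<psi> a = 0"
proof -
  have "\<bar>\<psi> a\<bar> \<le> e" if "e > 0" for e
  proof -
    obtain \<eta> where \<eta>: "\<eta> > 0"
      "\<And>f :: 'a \<Rightarrow>\<^sub>L real. norm f \<le> 1 \<Longrightarrow> 1 - \<eta> \<le> \<bar>blinfun_apply f x0\<bar> \<Longrightarrow> \<bar>blinfun_apply f x\<bar> < e / \<nu>"
      using dual_ball_uniform_annihilation[OF fin x0(1) _ perp] \<open>e > 0\<close> \<open>\<nu> > 0\<close> by (metis divide_pos_pos)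
    have small: "\<bar>a n\<bar> \<le> e / \<nu>" if "1 - \<eta> \<le> \<bar>J x0 n\<bar>" for n
    proof -
      obtain f :: "'a \<Rightarrow>\<^sub>L real" where "\<And>y. blinfun_apply f y = J y n" "norm f \<le> 1"
        using isometry_coordinate_blinfun[OF J] by blast
      then have "\<bar>J x n\<bar> < e / \<nu>" using \<eta>(2)[of f] that by simp
      then show ?thesis using a(2)[of n] by simp
    qed
    have "norm (J x0) \<le> 1" "e / \<nu> \<ge> 0" using x0(1) J(2) \<open>e > 0\<close> \<open>\<nu> > 0\<close> by simp_all
    from peak_functional_small[OF \<psi> this(1) x0(2) \<eta>(1) this(2) a(1) small]
    have "\<bar>\<psi> a\<bar> \<le> \<nu> * (e / \<nu>)" .
    then show ?thesis using \<open>\<nu> > 0\<close> by simp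
  qed
  then have "\<bar>\<psi> a\<bar> \<le> 0" by (rule field_le_epsilon) simp
  then show ?thesis by simp
qed

lemma bcontfun_extension_face_difference:
  fixes J :: "'a::real_normed_vector \<Rightarrow> nat \<Rightarrow>\<^sub>C real"
    and S :: "(nat \<Rightarrow>\<^sub>C real) \<Rightarrow> 'b::real_normed_vector" and y0 :: "'b \<Rightarrow> real"
  assumes fin: "fin_dim_space TYPE('a)" and "\<nu> > 0"
    and J: "linear J" "\<And>y. norm (J y) = norm y"
    and S: "linear S" "\<And>z. norm (S z) \<le> \<nu> * norm z"
    and y0: "linear y0" "\<And>y. \<bar>y0 y\<bar> \<le> norm y"
    and x0: "norm x0 \<le> 1" "y0 (S (J x0)) = \<nu>"
    and perp: "\<And>f :: 'a \<Rightarrow>\<^sub>L real. norm f \<le> 1 \<Longrightarrow> blinfun_apply f x0 = 1 \<Longrightarrow> blinfun_apply f x = 0"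
    and x: "norm x \<le> 1" "y0 (S (J x)) = 0"
  obtains p q where "norm p \<le> 1" "norm q \<le> 1" "y0 p = 1" "y0 q = 1" "p - q = (2 / \<nu>) *\<^sub>R S (J x)"
proof -
  define u where "u n = J x0 n" for n
  define v where "v n = J x n" for n
  have u: "\<bar>u n\<bar> \<le> 1" and v: "\<bar>v n\<bar> \<le> 1" for n
    using norm_bounded[of "J x0" n] norm_bounded[of "J x" n] J(2) x0(1) x(1) by (auto simp: u_def v_def)
  \<comment> \<open>the smallest correction making both \<open>J x0 + J x + a\<close> and \<open>J x0 - J x + a\<close> lie in the unit ball\<close>
  define a where "a n = (if u n \<ge> 0 then - max 0 (u n + \<bar>v n\<bar> - 1) else max 0 (\<bar>v n\<bar> - u n - 1))" for n
  have a_le_v: "\<bar>a n\<bar> \<le> \<bar>v n\<bar>" and a_plus: "\<bar>u n + v n + a n\<bar> \<le> 1" and a_minus: "\<bar>u n - v n + a n\<bar> \<le> 1" for n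
    using u[of n] v[of n] by (auto simp: a_def abs_if max_def)
  define aC where "aC = Bcontfun a"
  have aC_apply: "apply_bcontfun aC = a"
    unfolding aC_def using a_le_v v by (intro apply_Bcontfun_bounded[where M = 1]) (meson order_trans)
  have "norm aC \<le> 1"
    by (rule norm_bound) (use a_le_v v in \<open>auto simp: aC_apply intro: order_trans\<close>)
  define \<psi> where "\<psi> z = y0 (S z)" for z
  have \<psi>: "linear \<psi>" unfolding \<psi>_def using linear_compose[OF S(1) y0(1)] by (simp add: o_def)
  have \<psi>_bound: "\<bar>\<psi> z\<bar> \<le> \<nu> * norm z" for z
    unfolding \<psi>_def using y0(2)[of "S z"] S(2)[of z] by linarith
  have \<psi>_aC: "\<psi> aC = 0"
    using x0(2) a_le_v by (intro peak_functional_annihilates[OF fin \<open>\<nu> > 0\<close> J \<psi> \<psi>_bound x0(1) _ perp \<open>norm aC \<le> 1\<close>])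
      (simp_all add: \<psi>_def aC_apply v_def)
  define p where "p = (1 / \<nu>) *\<^sub>R S (J x0 + J x + aC)"
  define q where "q = (1 / \<nu>) *\<^sub>R S (J x0 - J x + aC)"
  have "norm (J x0 + J x + aC) \<le> 1" "norm (J x0 - J x + aC) \<le> 1"
    using a_plus a_minus by (auto intro!: norm_bound simp: aC_apply u_def v_def)
  then have "norm p \<le> 1" "norm q \<le> 1"
    using S(2)[of "J x0 + J x + aC"] S(2)[of "J x0 - J x + aC"] \<open>\<nu> > 0\<close>
    by (auto simp: p_def q_def field_simps intro: order_trans mult_left_le)
  moreover have "y0 p = 1" "y0 q = 1"
    using x0(2) x(2) \<psi>_aC \<open>\<nu> > 0\<close>
    by (simp_all add: p_def q_def \<psi>_def linear_add[OF S(1)] linear_diff[OF S(1)]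
        linear_scale[OF y0(1)] linear_add[OF y0(1)] linear_diff[OF y0(1)])
  moreover have "p - q = (2 / \<nu>) *\<^sub>R S (J x)"
  proof -
    have "S (J x0 + J x + aC) - S (J x0 - J x + aC) = 2 *\<^sub>R S (J x)"
      by (simp add: linear_add[OF S(1)] linear_diff[OF S(1)] scaleR_2)
    then show ?thesis by (simp add: p_def q_def flip: scaleR_diff_right)
  qed
  ultimately show thesis by (rule that)
qed

lemma norming_composite_blinfun:
  fixes T :: "'a::real_normed_vector \<Rightarrow> 'b::real_normed_vector"
  assumes "fin_dim_space TYPE('a)" and T: "bounded_linear T" and "onorm T > 0"
    and y0: "linear y0" "\<And>y. \<bar>y0 y\<bar> \<le> norm y" "y0 (T x0) = onorm T"
  obtains g :: "'a \<Rightarrow>\<^sub>L real"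
  where "norm g \<le> 1" "blinfun_apply g x0 = 1" "\<And>x. blinfun_apply g x = y0 (T x) / onorm T"
proof -
  have Tlin: "linear T" using T by (rule bounded_linear.linear)
  have "linear (\<lambda>x. y0 (T x) / onorm T)"
    by (rule linearI) (simp_all add: linear_add[OF Tlin] linear_add[OF y0(1)] linear_scale[OF Tlin]
        linear_scale[OF y0(1)] add_divide_distrib)
  then have g: "blinfun_apply (Blinfun (\<lambda>x. y0 (T x) / onorm T)) x = y0 (T x) / onorm T" for x
    by (simp add: bounded_linear_Blinfun_apply fin_dim_space_bounded_linear[OF assms(1)])
  have "\<bar>y0 (T x) / onorm T\<bar> \<le> norm x" for x
    using y0(2)[of "T x"] onorm[OF T, of x] \<open>onorm T > 0\<close> by (simp add: abs_divide field_simps)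
  then have "norm (Blinfun (\<lambda>x. y0 (T x) / onorm T)) \<le> 1"
    by (intro norm_blinfun_bound) (simp_all add: g)
  moreover have "blinfun_apply (Blinfun (\<lambda>x. y0 (T x) / onorm T)) x0 = 1"
    using y0(3) \<open>onorm T > 0\<close> by (simp add: g)
  ultimately show thesis using g by (rule that)
qed

lemma hahn_banach_op_annihilator_image:
  fixes T :: "'a::real_normed_vector \<Rightarrow> 'b::real_normed_vector"
  assumes fin: "fin_dim_space TYPE('a)" and T: "hahn_banach_op T" and pos: "onorm T > 0"
    and x0: "norm x0 \<le> 1"
    and y0: "linear y0" "\<And>y. \<bar>y0 y\<bar> \<le> norm y" "y0 (T x0) = onorm T"
    and perp: "\<And>f :: 'a \<Rightarrow>\<^sub>L real. norm f \<le> 1 \<Longrightarrow> blinfun_apply f x0 = 1 \<Longrightarrow> blinfun_apply f x = 0"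
  shows "T x \<in> span {p - q | p q. p \<in> cball 0 1 \<inter> {y. y0 y = 1} \<and> q \<in> cball 0 1 \<inter> {y. y0 y = 1}}"
    (is "_ \<in> span ?D")
proof (cases "x = 0")
  case True
  then show ?thesis using T by (simp add: hahn_banach_op_def linear_simps span_zero)
next
  case False
  have Tbl: "bounded_linear T" using T by (simp add: hahn_banach_op_def)
  obtain J :: "'a \<Rightarrow> nat \<Rightarrow>\<^sub>C real" where J: "linear J" "\<And>y. norm (J y) = norm y"
    using fin_dim_space_isometric_embedding_bcontfun[OF fin] by blast
  obtain S where S: "linear S" "\<And>z. norm (S z) \<le> onorm T * norm z" "\<And>y. S (J y) = T y"
    using hahn_banach_op_bcontfun_extension[OF T J] by blast
  obtain g :: "'a \<Rightarrow>\<^sub>L real" where "norm g \<le> 1" "blinfun_apply g x0 = 1"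
    "\<And>y. blinfun_apply g y = y0 (T y) / onorm T"
    using norming_composite_blinfun[OF fin Tbl pos y0] by blast
  define x' where "x' = x /\<^sub>R norm x"
  have perp': "blinfun_apply f x' = 0" if "norm f \<le> 1" "blinfun_apply f x0 = 1" for f :: "'a \<Rightarrow>\<^sub>L real"
    using perp[OF that] by (simp add: x'_def blinfun.scaleR_right)
  have "y0 (S (J x')) = 0"
    using perp'[OF \<open>norm g \<le> 1\<close> \<open>blinfun_apply g x0 = 1\<close>] pos \<open>\<And>y. blinfun_apply g y = _\<close> S(3)
    by simp
  moreover have "norm x' \<le> 1" using False by (simp add: x'_def)
  ultimately obtain p q where "norm p \<le> 1" "norm q \<le> 1" "y0 p = 1" "y0 q = 1"
    "p - q = (2 / onorm T) *\<^sub>R S (J x')"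
    using bcontfun_extension_face_difference[OF fin pos J S(1,2) y0(1,2) x0 _ perp'] y0(3) S(3)
    by metis
  then have "p \<in> cball 0 1 \<inter> {y. y0 y = 1}" "q \<in> cball 0 1 \<inter> {y. y0 y = 1}" by auto
  then have "p - q \<in> ?D" by blast
  then have "(onorm T * norm x / 2) *\<^sub>R (p - q) \<in> span ?D" by (intro span_scale span_base)
  also have "(onorm T * norm x / 2) *\<^sub>R (p - q) = T x"
    using \<open>p - q = _\<close> pos False S(3)
    by (simp add: x'_def linear_scale[OF bounded_linear.linear[OF Tbl]])
  finally show ?thesis .
qed

section \<open>Dimension counting\<close>

lemma dim_le_dim_add_card:
  fixes A S E :: "'a::real_normed_vector set"
  assumes "fin_dim_space TYPE('a)" and "finite E" and "A \<subseteq> span (S \<union> E)"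
  shows "dim A \<le> dim S + card E"
proof -
  obtain B where B: "B \<subseteq> S" "independent B" "S \<subseteq> span B" "card B = dim S"
    using basis_exists[of S] by blast
  obtain W :: "'a set" where W: "finite W" "span W = UNIV"
    using assms(1) unfolding fin_dim_space_def by blast
  have "finite B" using independent_span_bound[OF W(1) B(2)] W(2) by auto
  have "S \<union> E \<subseteq> span (B \<union> E)"
    using B(3) span_mono[of B "B \<union> E"] span_superset[of "B \<union> E"] by blast
  then have "A \<subseteq> span (B \<union> E)" using assms(3) by (metis span_minimal subspace_span order_trans)
  then have "dim A \<le> card (B \<union> E)" using \<open>finite B\<close> assms(2) by (intro dim_le_card) auto
  also have "\<dots> \<le> card B + card E" by (rule card_Un_le)
  finally show ?thesis using B(4) by simp
qed

lemma annihilator_complement: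
  fixes H :: "('a::real_normed_vector \<Rightarrow>\<^sub>L real) set"
  assumes "finite H"
  obtains E where "finite E" "card E \<le> card H" "span ({x. \<forall>h\<in>H. blinfun_apply h x = 0} \<union> E) = UNIV"
proof -
  from assms have "\<exists>E. finite E \<and> card E \<le> card H \<and> span ({x. \<forall>h\<in>H. blinfun_apply h x = 0} \<union> E) = UNIV"
  proof (induction H rule: finite_induct)
    case empty
    show ?case by (intro exI[of _ "{}"]) (simp add: span_UNIV)
  next
    case (insert h H)
    define W where "W = {x. \<forall>h\<in>H. blinfun_apply h x = 0}"
    define W' where "W' = {x. \<forall>h\<in>insert h H. blinfun_apply h x = 0}"
    obtain E where E: "finite E" "card E \<le> card H" "span (W \<union> E) = UNIV"
      using insert.IH unfolding W_def by blast
    show ?case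
    proof (cases "\<forall>w\<in>W. blinfun_apply h w = 0")
      case True
      then have "W' = W" unfolding W'_def W_def by auto
      then show ?thesis using E insert.hyps unfolding W'_def by (intro exI[of _ E]) auto
    next
      case False
      \<comment> \<open>a vector \<open>w \<in> W\<close> with \<open>h w = 1\<close> spans a complement of \<open>W'\<close> in \<open>W\<close>\<close>
      then obtain w1 where w1: "w1 \<in> W" "blinfun_apply h w1 \<noteq> 0" by blast
      define w where "w = inverse (blinfun_apply h w1) *\<^sub>R w1"
      have hw: "blinfun_apply h w = 1" using w1(2) by (simp add: w_def blinfun.scaleR_right)
      have wW: "w \<in> W" using w1(1) by (simp add: w_def W_def blinfun.scaleR_right)
      have "W \<subseteq> span (W' \<union> insert w E)"
      proof
        fix z assume z: "z \<in> W"
        have "z - blinfun_apply h z *\<^sub>R w \<in> W'"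
          using z wW hw by (simp add: W'_def W_def blinfun.diff_right blinfun.scaleR_right)
        then have "(z - blinfun_apply h z *\<^sub>R w) + blinfun_apply h z *\<^sub>R w \<in> span (W' \<union> insert w E)"
          by (intro span_add span_scale span_base) auto
        then show "z \<in> span (W' \<union> insert w E)" by simp
      qed
      moreover have "E \<subseteq> span (W' \<union> insert w E)" using span_superset[of "W' \<union> insert w E"] by blast
      ultimately have "W \<union> E \<subseteq> span (W' \<union> insert w E)" by blast
      then have "span (W \<union> E) \<subseteq> span (W' \<union> insert w E)" by (intro span_minimal subspace_span)
      moreover have "card (insert w E) \<le> card (insert h H)"
        using E insert.hyps by (simp add: card_insert_if)
      ultimately show ?thesis using E unfolding W'_def by (intro exI[of _ "insert w E"]) auto
    qed
  qed
  then show thesis using that by blast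
qed

lemma dim_range_le_annihilator:
  fixes T :: "'a::real_normed_vector \<Rightarrow> 'b::real_normed_vector" and G :: "('a \<Rightarrow>\<^sub>L real) set"
  assumes "fin_dim_space TYPE('a)" "fin_dim_space TYPE('b)" and T: "linear T"
    and ann: "\<And>x. \<forall>f\<in>G. blinfun_apply f x = 0 \<Longrightarrow> T x \<in> span D"
  shows "dim (range T) \<le> dim D + dim G"
proof -
  obtain H where H: "H \<subseteq> G" "independent H" "G \<subseteq> span H" "card H = dim G"
    using basis_exists[of G] by blast
  obtain W :: "('a \<Rightarrow>\<^sub>L real) set" where W: "finite W" "span W = UNIV"
    using fin_dim_space_dual[OF assms(1)] unfolding fin_dim_space_def by blast
  have "finite H" using independent_span_bound[OF W(1) H(2)] W(2) by auto
  define V where "V = {x. \<forall>h\<in>H. blinfun_apply h x = 0}"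
  obtain E where E: "finite E" "card E \<le> card H" "span (V \<union> E) = UNIV"
    using annihilator_complement[OF \<open>finite H\<close>] unfolding V_def by blast
  have "T x \<in> span D" if "x \<in> V" for x
  proof (rule ann)
    have "subspace {f :: 'a \<Rightarrow>\<^sub>L real. blinfun_apply f x = 0}"
      by (auto simp: subspace_def plus_blinfun.rep_eq scaleR_blinfun.rep_eq)
    then have "span H \<subseteq> {f. blinfun_apply f x = 0}" using that by (intro span_minimal) (auto simp: V_def)
    then show "\<forall>f\<in>G. blinfun_apply f x = 0" using H(3) by blast
  qed
  then have "T ` (V \<union> E) \<subseteq> span (D \<union> T ` E)"
    using span_mono[of D "D \<union> T ` E"] span_superset[of "D \<union> T ` E"] by blast
  then have "span (T ` (V \<union> E)) \<subseteq> span (D \<union> T ` E)" by (intro span_minimal) auto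
  moreover have "range T = span (T ` (V \<union> E))" using E(3) span_linear_image[OF T] by metis
  ultimately have "range T \<subseteq> span (D \<union> T ` E)" by simp
  then have "dim (range T) \<le> dim D + card (T ` E)"
    using assms(2) E(1) by (intro dim_le_dim_add_card) auto
  also have "card (T ` E) \<le> card H" using card_image_le[OF E(1), of T] E(2) by linarith
  finally show ?thesis using H(4) by simp
qed

lemma dim_le_affdim_Suc:
  fixes S :: "'a::real_normed_vector set"
  assumes "fin_dim_space TYPE('a)" and "s \<in> S"
  shows "dim S \<le> affdim S + 1"
proof -
  have "S \<subseteq> span ({x - y | x y. x \<in> S \<and> y \<in> S} \<union> {s})"
  proof
    fix x assume "x \<in> S"
    then have "x - s \<in> span ({x - y | x y. x \<in> S \<and> y \<in> S} \<union> {s})"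
      using assms(2) by (intro span_base) blast
    moreover have "s \<in> span ({x - y | x y. x \<in> S \<and> y \<in> S} \<union> {s})" by (simp add: span_base)
    ultimately have "(x - s) + s \<in> span ({x - y | x y. x \<in> S \<and> y \<in> S} \<union> {s})"
      by (rule span_add)
    then show "x \<in> span ({x - y | x y. x \<in> S \<and> y \<in> S} \<union> {s})" by simp
  qed
  from dim_le_dim_add_card[OF assms(1) _ this] show ?thesis by (simp add: affdim_def)
qed

lemma affdim_le_fX:
  fixes S :: "'a::real_normed_vector set"
  assumes "fin_dim_space TYPE('a)" and "support_set (cball 0 1) S"
  shows "affdim S \<le> fX TYPE('a)"
proof -
  obtain W :: "'a set" where W: "finite W" "span W = UNIV"
    using assms(1) unfolding fin_dim_space_def by blast
  have "affdim S' \<le> card W" for S' :: "'a set"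
    unfolding affdim_def using W by (intro dim_le_card) auto
  then have "{affdim S' | S'. support_set (cball (0::'a) 1) S'} \<subseteq> {..card W}" by auto
  then have "finite {affdim S' | S'. support_set (cball (0::'a) 1) S'}"
    using finite_subset by blast
  then show ?thesis unfolding fX_def using assms(2) by (intro Max_ge) auto
qed

lemma support_set_cball_level:
  fixes \<phi> :: "'a::real_normed_vector \<Rightarrow> real"
  assumes "linear \<phi>" and "\<And>y. \<phi> y \<le> norm y" and "norm u \<le> 1" and "\<phi> u = 1"
  shows "support_set (cball 0 1) (cball 0 1 \<inter> {y. \<phi> y = 1})"
  unfolding support_set_def
proof (intro exI conjI)
  show "\<phi> \<noteq> (\<lambda>x. 0)" using assms(4) by auto
  show "\<forall>y\<in>cball 0 1. \<phi> y \<le> 1" by (auto intro: order_trans[OF assms(2)])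
  show "\<exists>y\<in>cball 0 1. \<phi> y = 1" using assms(3,4) by auto
qed (use assms(1) in auto)

lemma support_set_dual_evaluation:
  fixes x0 :: "'a::real_normed_vector" and g :: "'a \<Rightarrow>\<^sub>L real"
  assumes "norm x0 \<le> 1" and "norm g \<le> 1" and "blinfun_apply g x0 = 1"
  shows "support_set (cball 0 1) (cball 0 1 \<inter> {f :: 'a \<Rightarrow>\<^sub>L real. blinfun_apply f x0 = 1})"
proof (rule support_set_cball_level)
  show "norm g \<le> 1" "blinfun_apply g x0 = 1" by (fact assms(2), fact assms(3))
  show "linear (\<lambda>f :: 'a \<Rightarrow>\<^sub>L real. blinfun_apply f x0)"
    by (rule bounded_linear.linear[OF blinfun.bounded_linear_left])
  show "blinfun_apply f x0 \<le> norm f" for f :: "'a \<Rightarrow>\<^sub>L real"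
  proof -
    have "blinfun_apply f x0 \<le> norm f * norm x0" using norm_blinfun[of f x0] by simp
    also have "\<dots> \<le> norm f" using mult_left_le[OF assms(1) norm_ge_zero] .
    finally show ?thesis .
  qed
qed

lemma hahn_banach_op_rank_le:
  fixes T :: "'a::real_normed_vector \<Rightarrow> 'b::real_normed_vector"
  assumes "fin_dim_space TYPE('a)" "fin_dim_space TYPE('b)" and T: "hahn_banach_op T"
    and pos: "onorm T > 0" and x0: "norm x0 \<le> 1"
    and y0: "linear y0" "\<And>y. \<bar>y0 y\<bar> \<le> norm y" "y0 (T x0) = onorm T"
  shows "dim (range T) \<le> affdim (cball (0::'b) 1 \<inter> {y. y0 y = 1})
    + dim (cball (0::'a \<Rightarrow>\<^sub>L real) 1 \<inter> {f. blinfun_apply f x0 = 1})"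
proof -
  have "linear T" using T by (simp add: hahn_banach_op_def bounded_linear.linear)
  moreover have "T x \<in> span {p - q | p q. p \<in> cball 0 1 \<inter> {y. y0 y = 1} \<and> q \<in> cball 0 1 \<inter> {y. y0 y = 1}}"
    if perp: "\<forall>f \<in> cball 0 1 \<inter> {f :: 'a \<Rightarrow>\<^sub>L real. blinfun_apply f x0 = 1}. blinfun_apply f x = 0"
    for x
  proof (rule hahn_banach_op_annihilator_image[OF assms(1) T pos x0 y0])
    fix f :: "'a \<Rightarrow>\<^sub>L real" assume "norm f \<le> 1" "blinfun_apply f x0 = 1"
    then show "blinfun_apply f x = 0" using perp by simp
  qed
  ultimately show ?thesis
    using dim_range_le_annihilator[OF assms(1,2)] by (simp add: affdim_def)
qed

theorem mainTheorem2:
  fixes T :: "'a::real_normed_vector \<Rightarrow> 'b::real_normed_vector" and k :: nat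
  assumes "fin_dim_space TYPE('a)" and "fin_dim_space TYPE('b)"
    and "hahn_banach_op T" and "dim (range T) = k"
  shows "fX TYPE('a \<Rightarrow>\<^sub>L real) + fX TYPE('b) \<ge> k - 1"
proof -
  have T: "bounded_linear T" using assms(3) by (simp add: hahn_banach_op_def)
  show ?thesis
  proof (cases "onorm T > 0")
    case False
    then have "range T \<subseteq> span {}" using onorm_pos_lt[OF T] by (auto simp: span_empty)
    then have "k = 0" using assms(4) dim_le_card[of "range T" "{}"] by simp
    then show ?thesis by simp
  next
    case True
    obtain x0 where x0: "norm x0 \<le> 1" "norm (T x0) = onorm T"
      using fin_dim_space_onorm_attained[OF assms(1) T] by blast
    obtain y0 where y0: "linear y0" "\<And>y. \<bar>y0 y\<bar> \<le> norm y" "y0 (T x0) = onorm T"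
      using fin_dim_space_norming_functional[OF assms(2), of "T x0"] x0(2) by metis
    obtain g :: "'a \<Rightarrow>\<^sub>L real" where g: "norm g \<le> 1" "blinfun_apply g x0 = 1"
      using norming_composite_blinfun[OF assms(1) T True y0] by blast
    define G where "G = cball (0 :: 'a \<Rightarrow>\<^sub>L real) 1 \<inter> {f. blinfun_apply f x0 = 1}"
    define F where "F = cball (0 :: 'b) 1 \<inter> {y. y0 y = 1}"
    have "support_set (cball 0 1) G"
      unfolding G_def using x0(1) g by (rule support_set_dual_evaluation)
    moreover have "support_set (cball 0 1) F"
      unfolding F_def using y0 x0(2) True
      by (intro support_set_cball_level[where u = "T x0 /\<^sub>R onorm T"]) (auto simp: linear_scale abs_le_iff)
    moreover have "dim G \<le> affdim G + 1"
      using dim_le_affdim_Suc[OF fin_dim_space_dual[OF assms(1)], of g G] g by (simp add: G_def)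
    ultimately show ?thesis
      using hahn_banach_op_rank_le[OF assms(1,2,3) True x0(1) y0] assms(4)
        affdim_le_fX[OF fin_dim_space_dual[OF assms(1)], of G] affdim_le_fX[OF assms(2), of F]
      unfolding F_def G_def by linarith
  qed
qed

end
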